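(* In the transactional panorama model described in the context, for any view graph, any (sequence of) write transactions in any state of computation, and any sequence of read transactions, it is always possible to answer the read transactions so that any chosen two of the three properties monotonicity, visibility, and consistency-minimal hold.
   Context: A view graph is a directed acyclic graph on a fixed set $N$ of nodes (source data and views); there is an edge $n_j \to n_i$ if view $n_i$ takes $n_j$ as input, and the dependents of a node are the nodes reachable from it. The view graph is multi-versioned. Write transactions $w^{t_1},\dots,w^{t_n}$ (timestamps $t_1<\dots<t_n$, starting from an initial version $G^{t_0}$) each modify some source nodes and must recompute their dependents; they are processed one at a time in timestamp order. Write transaction $w^{t_i}$ creates version $G^{t_i}=(E,N,V^{t_i})$, where for each node $n_k$ the set $V^{t_i}$ contains: the result $v_k^{t_i}$ if $w^{t_i}$ updates $n_k$ and has already computed it; a placeholder $UC_k^{t_i}$ ("under computation") if $w^{t_i}$ updates $n_k$ but has not yet computed it; or the result of $n_k$ from the previous version if $w^{t_i}$ does not update $n_k$. A committed version contains no UCs. The timestamp of a returned state is the timestamp of the version it belongs to. Read transactions $r^{s_1},\dots,r^{s_m}$ ($s_1<\dots<s_m$) each read the set of views in the user's current viewport (a subset of $N$, which may change between reads) and return immediately, without waiting, a set $H^{s_i}$ containing one state (a view result or a UC) per view read. Monotonicity: for any view $n_k$ read by two transactions $r^{s_i}, r^{s_j}$ with $s_i<s_j$, returning states with timestamps $t_p$ and $t_q$, we have $t_p \le t_q$. Visibility: no $H^{s_i}$ contains a UC. Consistency: for each $r^{s_i}$ there is a version $G^{t_j}=(E,N,V^{t_j})$ with $t_j\le s_i$ and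 $H^{s_i}\subseteq V^{t_j}$. Consistency-minimal: consistency holds and each read transaction returns the states (restricted to its views) of the most recent version of the view graph among those that minimize the number of UCs returned for that transaction (the minimization being over the versions permitted by the other properties that are required). *)

theory Defs
  imports Complex_Main
begin

text \<open>States of a node in a version: the result v_k^{t_j} of node k computed by
  write transaction j (j = 0 is the initial version), or the placeholder UC_k^{t_j}.\<close>
datatype 'n vstate = Res 'n nat | UC 'n nat

fun is_UC :: "'n vstate \<Rightarrow> bool" where
  "is_UC (Res k j) = False"
| "is_UC (UC k j) = True"

fun ts :: "(nat \<Rightarrow> real) \<Rightarrow> 'n vstate \<Rightarrow> real" where
  "ts t (Res k j) = t j"
| "ts t (UC k j) = t j"

definition source_nodes :: "'n set \<Rightarrow> ('n \<times> 'n) set \<Rightarrow> 'n set" where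
  "source_nodes N E = {x \<in> N. \<forall>y. (y, x) \<notin> E}"

text \<open>Nodes updated by a write modifying the source set S: S together with its
  dependents (nodes reachable from S).\<close>
definition updated :: "('n \<times> 'n) set \<Rightarrow> 'n set \<Rightarrow> 'n set" where
  "updated E S = E\<^sup>* `` S"

text \<open>State of node k in version G^{t_j}, given which nodes of write j are already
  computed (c j) and which nodes write j updates (upd j).\<close>
primrec vst :: "(nat \<Rightarrow> 'n set) \<Rightarrow> (nat \<Rightarrow> 'n set) \<Rightarrow> nat \<Rightarrow> 'n \<Rightarrow> 'n vstate" where
  "vst upd c 0 k = Res k 0"
| "vst upd c (Suc j) k =
     (if k \<in> upd (Suc j) then (if k \<in> c (Suc j) then Res k (Suc j) else UC k (Suc j))
      else vst upd c j k)"

definition Vset :: "'n set \<Rightarrow> (nat \<Rightarrow> 'n set) \<Rightarrow> (nat \<Rightarrow> 'n set) \<Rightarrow> nat \<Rightarrow> 'n vstate set" where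
  "Vset N upd c j = (\<lambda>k. vst upd c j k) ` N"

text \<open>Answers: H i k is the state returned for view k by read i (for k in the viewport R i).
  cmp i j is the set of nodes of write j already computed at the time of read i.\<close>
definition wf_answer where
  "wf_answer n t m s R upd cmp (H :: nat \<Rightarrow> 'n \<Rightarrow> 'n vstate) \<longleftrightarrow>
     (\<forall>i\<in>{1..m}. \<forall>k\<in>R i. \<exists>j\<le>n. t j \<le> s i \<and> H i k = vst upd (cmp i) j k)"

definition monotonic where
  "monotonic t m s R (H :: nat \<Rightarrow> 'n \<Rightarrow> 'n vstate) \<longleftrightarrow>
     (\<forall>i\<in>{1..m}. \<forall>i'\<in>{1..m}. \<forall>k. (s i :: real) < s i' \<longrightarrow> k \<in> R i \<longrightarrow> k \<in> R i' \<longrightarrow>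
        ts t (H i k) \<le> ts t (H i' k))"

definition visible where
  "visible m R (H :: nat \<Rightarrow> 'n \<Rightarrow> 'n vstate) \<longleftrightarrow>
     (\<forall>i\<in>{1..m}. \<forall>k\<in>R i. \<not> is_UC (H i k))"

definition consistent where
  "consistent N n t m s R upd cmp (H :: nat \<Rightarrow> 'n \<Rightarrow> 'n vstate) \<longleftrightarrow>
     (\<forall>i\<in>{1..m}. \<exists>j\<le>n. t j \<le> s i \<and> (\<lambda>k. H i k) ` R i \<subseteq> Vset N upd (cmp i) j)"

text \<open>Version j is permitted for read i by consistency and by those of the other
  properties that are required (monotonicity w.r.t. the earlier reads; visibility).\<close>
definition permitted where
  "permitted reqM reqV n t m s R upd cmp (H :: nat \<Rightarrow> 'n \<Rightarrow> 'n vstate) i j \<longleftrightarrow>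
     j \<le> n \<and> t j \<le> s i \<and>
     (reqV \<longrightarrow> (\<forall>k\<in>R i. \<not> is_UC (vst upd (cmp i) j k))) \<and>
     (reqM \<longrightarrow> (\<forall>i'\<in>{1..m}. \<forall>k. (s i' :: real) < s i \<longrightarrow> k \<in> R i' \<longrightarrow> k \<in> R i \<longrightarrow>
                   ts t (H i' k) \<le> ts t (vst upd (cmp i) j k)))"

definition num_UC where
  "num_UC R upd cmp i j = card {k \<in> R i. is_UC (vst upd (cmp i) j k)}"

definition consistency_minimal where
  "consistency_minimal reqM reqV N n t m s R upd cmp (H :: nat \<Rightarrow> 'n \<Rightarrow> 'n vstate) \<longleftrightarrow>
     consistent N n t m s R upd cmp H \<and>
     (\<forall>i\<in>{1..m}. \<exists>j. permitted reqM reqV n t m s R upd cmp H i j \<and>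
        (\<forall>j'. permitted reqM reqV n t m s R upd cmp H i j' \<longrightarrow>
              num_UC R upd cmp i j \<le> num_UC R upd cmp i j') \<and>
        (\<forall>j'. permitted reqM reqV n t m s R upd cmp H i j' \<longrightarrow>
              num_UC R upd cmp i j' = num_UC R upd cmp i j \<longrightarrow> t j' \<le> t j) \<and>
        (\<forall>k\<in>R i. H i k = vst upd (cmp i) j k))"

text \<open>Admissible state of computation of the writes at read times: writes are processed
  one at a time in timestamp order (at each read, writes before some index c are
  committed, writes after c have computed nothing), only updated nodes are computed,
  and computation never regresses between reads.\<close>
definition comp_state where
  "comp_state n m upd (cmp :: nat \<Rightarrow> nat \<Rightarrow> 'n set) \<longleftrightarrow>
     (\<forall>i\<in>{1..m}. \<forall>j. cmp i j \<subseteq> upd j) \<and>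
     (\<forall>i\<in>{1..m}. \<exists>c\<le>n. (\<forall>j. 1 \<le> j \<longrightarrow> j < c \<longrightarrow> cmp i j = upd j) \<and>
                        (\<forall>j. c < j \<longrightarrow> cmp i j = {})) \<and>
     (\<forall>i\<in>{1..m}. \<forall>i'\<in>{1..m}. \<forall>j. i \<le> i' \<longrightarrow> cmp i j \<subseteq> cmp i' j)"

end

theory Submission
  imports Defs
begin

text \<open>Monotonicity and visibility: answer every read with the initial version, which is
  committed and never newer than anything read later.
  Visibility and consistency-minimality: without the monotonicity constraint the versions
  permitted for a read do not depend on the other answers, and the initial version is
  always permitted; so each read is answered by a best permitted version on its own.
  Monotonicity and consistency-minimality: the versions permitted for a read depend only
  on the answers of earlier reads, so the reads are answered greedily in timestamp order.
  A best version always exists, because the newest version chosen by an earlier read is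
  permitted: the timestamp of the state of a node grows with the version index.\<close>

lemma ts_vst_indep: "ts t (vst U c j k) = ts t (vst U c' j k)"
  by (induction j) auto

lemma ts_vst_le:
  assumes "mono_on {0..n} t" and "j \<le> n"
  shows "ts t (vst U c j k) \<le> t j"
  using assms(2)
proof (induction j)
  case (Suc j)
  then have "t j \<le> t (Suc j)" using mono_onD[OF assms(1)] by simp
  with Suc show ?case by auto
qed simp

lemma ts_vst_mono:
  assumes "mono_on {0..n} t" and "j \<le> j'" and "j' \<le> n"
  shows "ts t (vst U c j k) \<le> ts t (vst U c' j' k)"
  using assms(2,3)
proof (induction j' rule: dec_induct)
  case base
  show ?case by (simp only: ts_vst_indep[of t U c j k c'])
next
  case (step l)
  have "l \<le> n" using step by simp
  then have "ts t (vst U c' l k) \<le> t l" by (rule ts_vst_le[OF assms(1)])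
  moreover have "t l \<le> t (Suc l)" using mono_onD[OF assms(1)] step by simp
  ultimately show ?case using step by auto
qed

lemma exists_min_cost_latest:
  fixes f :: "'a \<Rightarrow> nat" and t :: "'a \<Rightarrow> 'b::linorder"
  assumes "finite P" and "P \<noteq> {}"
  shows "\<exists>j\<in>P. (\<forall>j'\<in>P. f j \<le> f j') \<and> (\<forall>j'\<in>P. f j' = f j \<longrightarrow> t j' \<le> t j)"
proof -
  define Q where "Q = {j \<in> P. f j = Min (f ` P)}"
  have "Min (f ` P) \<in> f ` P"
    using assms by simp
  then have "finite Q" and "Q \<noteq> {}"
    using assms(1) unfolding Q_def by auto
  then have "Max (t ` Q) \<in> t ` Q"
    by simp
  then obtain j where "j \<in> Q" and "t j = Max (t ` Q)"
    by (metis imageE)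
  with \<open>finite Q\<close> have "\<forall>j'\<in>Q. t j' \<le> t j"
    by simp
  with \<open>j \<in> Q\<close> show ?thesis
    using assms(1) unfolding Q_def by (intro bexI[of _ j]) auto
qed

definition version_answer ::
    "(nat \<Rightarrow> 'n set) \<Rightarrow> (nat \<Rightarrow> nat \<Rightarrow> 'n set) \<Rightarrow> (nat \<Rightarrow> nat) \<Rightarrow> nat \<Rightarrow> 'n \<Rightarrow> 'n vstate" where
  "version_answer U cmp J i k = vst U (cmp i) (J i) k"

definition best_version where
  "best_version reqM reqV n t m s R U cmp (H :: nat \<Rightarrow> 'n \<Rightarrow> 'n vstate) i j \<longleftrightarrow>
     permitted reqM reqV n t m s R U cmp H i j \<and>
     (\<forall>j'. permitted reqM reqV n t m s R U cmp H i j' \<longrightarrow>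
        num_UC R U cmp i j \<le> num_UC R U cmp i j') \<and>
     (\<forall>j'. permitted reqM reqV n t m s R U cmp H i j' \<longrightarrow>
        num_UC R U cmp i j' = num_UC R U cmp i j \<longrightarrow> t j' \<le> t j)"

lemma best_version_exists:
  assumes "permitted reqM reqV n t m s R U cmp H i j0"
  shows "\<exists>j. best_version reqM reqV n t m s R U cmp H i j"
proof -
  let ?P = "{j. permitted reqM reqV n t m s R U cmp H i j}"
  have "finite ?P"
    by (rule finite_subset[of _ "{0..n}"]) (auto simp: permitted_def)
  moreover have "?P \<noteq> {}"
    using assms by blast
  ultimately show ?thesis
    using exists_min_cost_latest[of ?P "num_UC R U cmp i" t] unfolding best_version_def by auto
qed

lemma best_version_cong_earlier:
  assumes "\<forall>i'\<in>{1..m}. s i' < s i \<longrightarrow> H i' = H' i'"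
  shows "best_version reqM reqV n t m s R U cmp H i j = best_version reqM reqV n t m s R U cmp H' i j"
proof -
  have "permitted reqM reqV n t m s R U cmp H i = permitted reqM reqV n t m s R U cmp H' i"
    using assms unfolding permitted_def by fastforce
  then show ?thesis
    unfolding best_version_def by simp
qed

lemma best_version_non_monotone_indep:
  "best_version False reqV n t m s R U cmp H i j = best_version False reqV n t m s R U cmp H' i j"
  unfolding best_version_def permitted_def by simp

lemma wf_answer_version_answer:
  assumes "\<forall>i\<in>{1..m}. J i \<le> n \<and> t (J i) \<le> s i"
  shows "wf_answer n t m s R U cmp (version_answer U cmp J)"
  using assms unfolding wf_answer_def version_answer_def by blast

lemma visible_version_answer:
  assumes "\<forall>i\<in>{1..m}. permitted reqM True n t m s R U cmp H i (J i)"
  shows "visible m R (version_answer U cmp J)"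
  using assms unfolding visible_def version_answer_def permitted_def by blast

lemma monotonic_version_answer:
  assumes "\<forall>i\<in>{1..m}. permitted True reqV n t m s R U cmp (version_answer U cmp J) i (J i)"
  shows "monotonic t m s R (version_answer U cmp J)"
  unfolding monotonic_def
proof (intro ballI allI impI)
  fix i i' k
  assume "i \<in> {1..m}" "i' \<in> {1..m}" "s i < s i'" "k \<in> R i" "k \<in> R i'"
  with assms show "ts t (version_answer U cmp J i k) \<le> ts t (version_answer U cmp J i' k)"
    unfolding permitted_def by (simp add: version_answer_def)
qed

lemma consistency_minimal_version_answer:
  assumes "\<forall>i\<in>{1..m}. R i \<subseteq> N"
    and "\<forall>i\<in>{1..m}. best_version reqM reqV n t m s R U cmp (version_answer U cmp J) i (J i)"
  shows "consistency_minimal reqM reqV N n t m s R U cmp (version_answer U cmp J)"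
proof -
  have "consistent N n t m s R U cmp (version_answer U cmp J)"
    unfolding consistent_def
  proof
    fix i assume "i \<in> {1..m}"
    with assms have "J i \<le> n \<and> t (J i) \<le> s i" and "R i \<subseteq> N"
      unfolding best_version_def permitted_def by auto
    then show "\<exists>j\<le>n. t j \<le> s i \<and> version_answer U cmp J i ` R i \<subseteq> Vset N U (cmp i) j"
      unfolding Vset_def version_answer_def by blast
  qed
  with assms(2) show ?thesis
    unfolding consistency_minimal_def best_version_def version_answer_def by blast
qed

lemma exists_visible_best_versions:
  assumes "\<forall>i\<in>{1..m}. t 0 \<le> s i"
  shows "\<exists>J. \<forall>i\<in>{1..m}.
           best_version False True n t m s R U cmp (version_answer U cmp J) i (J i)"
proof -
  have "\<forall>i\<in>{1..m}. \<exists>j. best_version False True n t m s R U cmp H i j" for H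
    using assms by (auto intro: best_version_exists[of _ _ _ _ _ _ _ _ _ _ _ 0]
        simp: permitted_def)
  then obtain J where "\<forall>i\<in>{1..m}. best_version False True n t m s R U cmp undefined i (J i)"
    by metis
  then show ?thesis
    using best_version_non_monotone_indep by blast
qed

lemma permitted_newest_earlier:
  assumes "mono_on {0..n} t" and "t 0 \<le> s i"
    and "\<forall>i'\<in>{1..m}. s i' < s i \<longrightarrow> J i' \<le> n \<and> t (J i') \<le> s i'"
  shows "permitted True False n t m s R U cmp (version_answer U cmp J) i
           (Max (insert 0 (J ` {i'\<in>{1..m}. s i' < s i})))"
    (is "permitted _ _ _ _ _ _ _ _ _ _ _ (Max ?S)")
proof -
  have "finite ?S"
    by simp
  then have "Max ?S \<in> ?S"
    by (rule Max_in) simp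
  have above: "J i' \<le> Max ?S" if "i' \<in> {1..m}" and "s i' < s i" for i'
    using \<open>finite ?S\<close> that by simp
  have newest: "Max ?S \<le> n \<and> t (Max ?S) \<le> s i"
  proof (cases "Max ?S = 0")
    case True
    with assms(2) show ?thesis by simp
  next
    case False
    with \<open>Max ?S \<in> ?S\<close> obtain i' where "i' \<in> {1..m}" "s i' < s i" "Max ?S = J i'"
      by auto
    with assms(3) show ?thesis by fastforce
  qed
  moreover have "ts t (version_answer U cmp J i' k) \<le> ts t (vst U (cmp i) (Max ?S) k)"
    if "i' \<in> {1..m}" and "s i' < s i" for i' k
    unfolding version_answer_def
    using ts_vst_mono[OF assms(1) above[OF that]] newest by simp
  ultimately show ?thesis
    unfolding permitted_def by blast
qed

lemma exists_monotone_best_versions: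
  assumes "mono_on {0..n} t" and "mono_on {1..m} s" and "\<forall>i\<in>{1..m}. t 0 \<le> s i"
  shows "\<exists>J. \<forall>i\<in>{1..m}.
           best_version True False n t m s R U cmp (version_answer U cmp J) i (J i)"
proof -
  have earlier: "i' < i" if "i \<in> {1..m}" "i' \<in> {1..m}" "s i' < s i" for i i'
    using mono_onD[OF assms(2) that(1,2)] that(3) by (meson not_le order.strict_iff_not)
  have "p \<le> m \<Longrightarrow> \<exists>J. \<forall>i\<in>{1..p}.
          best_version True False n t m s R U cmp (version_answer U cmp J) i (J i)" for p
  proof (induction p)
    case (Suc p)
    then obtain J where J: "\<forall>i\<in>{1..p}.
        best_version True False n t m s R U cmp (version_answer U cmp J) i (J i)"
      by auto
    have "\<forall>i'\<in>{1..m}. s i' < s (Suc p) \<longrightarrow> J i' \<le> n \<and> t (J i') \<le> s i'"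
      using J earlier[of "Suc p"] Suc.prems unfolding best_version_def permitted_def by fastforce
    with Suc.prems assms(3) have "permitted True False n t m s R U cmp (version_answer U cmp J)
        (Suc p) (Max (insert 0 (J ` {i'\<in>{1..m}. s i' < s (Suc p)})))"
      by (intro permitted_newest_earlier[OF assms(1)]) auto
    then obtain j where
      j: "best_version True False n t m s R U cmp (version_answer U cmp J) (Suc p) j"
      using best_version_exists by blast
    have updated_agrees:
      "best_version True False n t m s R U cmp (version_answer U cmp (J(Suc p := j))) i
            ((J(Suc p := j)) i) =
          best_version True False n t m s R U cmp (version_answer U cmp J) i ((J(Suc p := j)) i)"
      if "i \<in> {1..Suc p}" for i
      using that earlier[of i "Suc p"] Suc.prems
      by (intro best_version_cong_earlier) (auto simp: version_answer_def fun_eq_iff)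
    show ?case
    proof (intro exI ballI)
      fix i assume "i \<in> {1..Suc p}"
      then show "best_version True False n t m s R U cmp (version_answer U cmp (J(Suc p := j))) i
          ((J(Suc p := j)) i)"
        unfolding updated_agrees[OF \<open>i \<in> {1..Suc p}\<close>] using J j by (cases "i = Suc p") auto
    qed
  qed simp
  then show ?thesis
    by blast
qed

theorem theorem2p7:
  fixes N :: "'n set" and E :: "('n \<times> 'n) set"
    and n :: nat and t :: "nat \<Rightarrow> real" and Src :: "nat \<Rightarrow> 'n set"
    and m :: nat and s :: "nat \<Rightarrow> real" and R :: "nat \<Rightarrow> 'n set"
    and cmp :: "nat \<Rightarrow> nat \<Rightarrow> 'n set"
  assumes "finite N" and "E \<subseteq> N \<times> N" and "acyclic E"
    and "strict_mono_on {0..n} t"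
    and "\<forall>j\<in>{1..n}. Src j \<subseteq> source_nodes N E"
    and "strict_mono_on {1..m} s"
    and "\<forall>i\<in>{1..m}. R i \<subseteq> N"
    and "\<forall>i\<in>{1..m}. t 0 \<le> s i"
    and "comp_state n m (\<lambda>j. updated E (Src j)) cmp"
  shows
    "(\<exists>H. wf_answer n t m s R (\<lambda>j. updated E (Src j)) cmp H \<and>
          monotonic t m s R H \<and> visible m R H) \<and>
     (\<exists>H. wf_answer n t m s R (\<lambda>j. updated E (Src j)) cmp H \<and>
          visible m R H \<and>
          consistency_minimal False True N n t m s R (\<lambda>j. updated E (Src j)) cmp H) \<and>
     (\<exists>H. wf_answer n t m s R (\<lambda>j. updated E (Src j)) cmp H \<and>
          monotonic t m s R H \<and>
          consistency_minimal True False N n t m s R (\<lambda>j. updated E (Src j)) cmp H)"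
proof -
  let ?U = "\<lambda>j. updated E (Src j)"
  have t_mono: "mono_on {0..n} t" and s_mono: "mono_on {1..m} s"
    using assms(4,6) by (simp_all add: strict_mono_on_imp_mono_on)
  let ?H0 = "version_answer ?U cmp (\<lambda>_. 0)"
  have "wf_answer n t m s R ?U cmp ?H0"
    using assms(8) by (intro wf_answer_version_answer) simp
  moreover have "monotonic t m s R ?H0" and "visible m R ?H0"
    by (simp_all add: monotonic_def visible_def version_answer_def)
  moreover obtain JV where "\<forall>i\<in>{1..m}.
      best_version False True n t m s R ?U cmp (version_answer ?U cmp JV) i (JV i)"
    using exists_visible_best_versions[of m t s n R ?U cmp] assms(8) by blast
  then have "wf_answer n t m s R ?U cmp (version_answer ?U cmp JV)"
    and "visible m R (version_answer ?U cmp JV)"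
    and "consistency_minimal False True N n t m s R ?U cmp (version_answer ?U cmp JV)"
    using assms(7)
    by (auto intro!: wf_answer_version_answer visible_version_answer
        consistency_minimal_version_answer simp: best_version_def permitted_def)
  moreover obtain JM where "\<forall>i\<in>{1..m}.
      best_version True False n t m s R ?U cmp (version_answer ?U cmp JM) i (JM i)"
    using exists_monotone_best_versions[OF t_mono s_mono assms(8), of R ?U cmp] by blast
  then have "wf_answer n t m s R ?U cmp (version_answer ?U cmp JM)"
    and "monotonic t m s R (version_answer ?U cmp JM)"
    and "consistency_minimal True False N n t m s R ?U cmp (version_answer ?U cmp JM)"
    using assms(7)
    by (auto intro!: wf_answer_version_answer monotonic_version_answer
        consistency_minimal_version_answer simp: best_version_def permitted_def)
  ultimately show ?thesis
    by blast
qed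

end
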